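(* Let $T$ be a rooted binary phylogenetic tree with root $\rho$ of out-degree 2 and leaf set $X$, under the $N_r$ model for any $r\ge2$. For $x\in X$ let $d(x)$ be the number of edges on the path from $\rho$ to $x$. Then (i) $RA_\varphi(T)=1-\sum_{x\in X}\left(\tfrac12\right)^{d(x)}p(x)$; (ii) $RA_\varphi(T)\ge 1-p_{\max}$ where $p_{\max}=\max\{p(x):x\in X\}$; (iii) if $p(x)$ takes the same value for all leaves $x\in X$ (the ultrametric case), then $RA_\varphi(T)=1-p_{\max}$.
   Context: A rooted binary phylogenetic tree is a finite tree with a distinguished root vertex $\rho$, all edges directed away from $\rho$, in which $\rho$ has out-degree 2 (or 1), and every other vertex has in-degree 1 and out-degree 0 or 2; out-degree-0 vertices are leaves, forming the leaf set $X$. Under the Neyman $r$-state model $N_r$ ($r\ge2$) on a state set $\mathcal A$ with $|\mathcal A|=r$, each edge $e$ carries a substitution probability $p_e\in[0,\frac{r-1}{r}]$; given $F(\rho)$, states propagate independently along edges: for an edge $(u,v)$, $F(v)=F(u)$ with probability $1-p_e$, and otherwise $F(v)$ is uniform among the $r-1$ other states. The character is $f=F|_X$, and $p(v)$ is the probability that $F(v)\neq F(\rho)$. The coin-toss method $\varphi$: each leaf is assigned its state $f(x)$; proceeding towards the root, a vertex whose two children have been assigned the same state gets that state, and a vertex whose children have different states gets one of the two states chosen by an independent fair coin toss (a vertex with a single child gets its child's state). $\varphi(T,f)$ is the state assigned to the root, and $RA_\varphi(T)=\mathbb P(\varphi(T,f)=\alpha\mid F(\rho)=\alpha)$. *)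

theory Defs
  imports "HOL-Probability.Probability"
begin

text \<open>Rooted binary phylogenetic trees with labelled leaves. A node carries its two
  outgoing edges, each with its substitution probability and the subtree below it.\<close>

datatype 'l ptree = Leaf 'l | Node real "'l ptree" real "'l ptree"

fun leaves :: "'l ptree \<Rightarrow> 'l list" where
  "leaves (Leaf x) = [x]"
| "leaves (Node p1 T1 p2 T2) = leaves T1 @ leaves T2"

fun edge_probs :: "'l ptree \<Rightarrow> real list" where
  "edge_probs (Leaf x) = []"
| "edge_probs (Node p1 T1 p2 T2) = p1 # p2 # edge_probs T1 @ edge_probs T2"

fun depth :: "'l ptree \<Rightarrow> 'l \<Rightarrow> nat" where
  "depth (Leaf y) x = 0"
| "depth (Node p1 T1 p2 T2) x =
     (if x \<in> set (leaves T1) then Suc (depth T1 x) else Suc (depth T2 x))"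

text \<open>Neyman r-state substitution along one edge, r = CARD('a).\<close>
definition mutate :: "real \<Rightarrow> 'a::finite \<Rightarrow> 'a pmf" where
  "mutate p a = bernoulli_pmf p \<bind>
      (\<lambda>b. if b then pmf_of_set (UNIV - {a}) else return_pmf a)"

text \<open>Distribution of the character f = F restricted to the leaves, given F(root) = a.\<close>
fun evolve :: "'l ptree \<Rightarrow> 'a::finite \<Rightarrow> ('l \<Rightarrow> 'a) pmf" where
  "evolve (Leaf x) a = return_pmf (\<lambda>_. a)"
| "evolve (Node p1 T1 p2 T2) a =
     mutate p1 a \<bind> (\<lambda>b1. mutate p2 a \<bind> (\<lambda>b2.
     evolve T1 b1 \<bind> (\<lambda>f1. evolve T2 b2 \<bind> (\<lambda>f2.
     return_pmf (\<lambda>x. if x \<in> set (leaves T1) then f1 x else f2 x)))))"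

fun coin_toss :: "'l ptree \<Rightarrow> ('l \<Rightarrow> 'a) \<Rightarrow> 'a pmf" where
  "coin_toss (Leaf x) f = return_pmf (f x)"
| "coin_toss (Node p1 T1 p2 T2) f =
     coin_toss T1 f \<bind> (\<lambda>s1. coin_toss T2 f \<bind> (\<lambda>s2.
     if s1 = s2 then return_pmf s1 else pmf_of_set {s1, s2}))"

text \<open>Reconstruction accuracy RA_phi(T) = P(phi(T,f) = alpha | F(root) = alpha).\<close>
definition RA_coin :: "'l ptree \<Rightarrow> 'a::finite \<Rightarrow> real" where
  "RA_coin T \<alpha> = pmf (evolve T \<alpha> \<bind> coin_toss T) \<alpha>"

definition p_leaf :: "'l ptree \<Rightarrow> 'a::finite \<Rightarrow> 'l \<Rightarrow> real" where
  "p_leaf T \<alpha> x = measure_pmf.prob (evolve T \<alpha>) {f. f x \<noteq> \<alpha>}"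

end

theory Submission
  imports Defs
begin

text \<open>Unfolding the coin tosses from the root downwards, the state assigned to the root is the
  state of a leaf reached by a fair random walk from the root, so each leaf x is chosen with
  probability (1/2)^d(x), and these weights sum to 1. Hence RA is the corresponding convex
  combination of the probabilities 1 - p(x), which gives (i), and (ii), (iii) are the usual
  bounds on a convex combination.\<close>

lemma sum_leaves_Node:
  assumes "distinct (leaves (Node p1 T1 p2 T2))"
  shows "(\<Sum>x\<in>set (leaves (Node p1 T1 p2 T2)). h (depth (Node p1 T1 p2 T2) x) x)
    = (\<Sum>x\<in>set (leaves T1). h (Suc (depth T1 x)) x) + (\<Sum>x\<in>set (leaves T2). h (Suc (depth T2 x)) x)"
proof -
  have disj: "set (leaves T1) \<inter> set (leaves T2) = {}"
    using assms by simp
  then show ?thesis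
    by (simp add: sum.union_disjoint) (intro arg_cong2[where f="(+)"] sum.cong; auto)
qed

lemma sum_leaf_weights_eq_1:
  "distinct (leaves T) \<Longrightarrow> (\<Sum>x\<in>set (leaves T). (1/2::real) ^ depth T x) = 1"
proof (induction T)
  case (Leaf x)
  then show ?case by simp
next
  case (Node p1 T1 p2 T2)
  then show ?case
    unfolding sum_leaves_Node[OF Node.prems, where h="\<lambda>d x. (1/2::real) ^ d"]
    by (simp only: power_Suc flip: sum_distrib_left) simp
qed

lemma pmf_coin_toss:
  fixes f :: "'l \<Rightarrow> 'a::finite"
  assumes "distinct (leaves T)"
  shows "pmf (coin_toss T f) \<beta> = (\<Sum>x\<in>set (leaves T). (1/2) ^ depth T x * indicator {\<beta>} (f x))"
  using assms
proof (induction T)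
  case (Leaf x)
  then show ?case by (simp add: indicator_def)
next
  case (Node p1 T1 p2 T2)
  let ?M1 = "measure_pmf (coin_toss T1 f)" and ?M2 = "measure_pmf (coin_toss T2 f)"
  have fair_choice: "pmf (if s1 = s2 then return_pmf s1 else pmf_of_set {s1, s2}) \<beta>
      = (indicator {\<beta>} s1 + indicator {\<beta>} s2) / (2::real)" for s1 s2 :: 'a
    by (auto simp: indicator_def pmf_of_set)
  have integrable: "integrable (measure_pmf M) g" for M :: "'a pmf" and g :: "'a \<Rightarrow> real"
    by (rule integrable_measure_pmf_finite) simp
  have "pmf (coin_toss (Node p1 T1 p2 T2) f) \<beta>
      = (\<integral>s1. (\<integral>s2. (indicator {\<beta>} s1 + indicator {\<beta>} s2) / 2 \<partial>?M2) \<partial>?M1)"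
    by (simp add: pmf_bind fair_choice)
  also have "\<dots> = (pmf (coin_toss T1 f) \<beta> + pmf (coin_toss T2 f) \<beta>) / 2"
    by (simp add: integral_add integrable measure_pmf.prob_eq_1 pmf.rep_eq flip: add_divide_distrib)
  also have "\<dots> = (\<Sum>x\<in>set (leaves (Node p1 T1 p2 T2)).
                    (1/2) ^ depth (Node p1 T1 p2 T2) x * indicator {\<beta>} (f x))"
    unfolding sum_leaves_Node[OF Node.prems, where h="\<lambda>d x. (1/2) ^ d * indicator {\<beta>} (f x)"]
    using Node
    by (simp only: power_Suc mult.assoc flip: sum_distrib_left) (simp del: sum_mult_indicator)
  finally show ?case .
qed

lemma expectation_indicator_leaf_state:
  "measure_pmf.expectation (evolve T \<alpha>) (\<lambda>f. indicator {\<alpha>} (f x) :: real) = 1 - p_leaf T \<alpha> x"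
proof -
  have "(\<lambda>f. indicator {\<alpha>} (f x) :: real) = indicator (UNIV - {f. f x \<noteq> \<alpha>})"
    by (auto simp: indicator_def)
  then have "measure_pmf.expectation (evolve T \<alpha>) (\<lambda>f. indicator {\<alpha>} (f x) :: real)
      = measure_pmf.prob (evolve T \<alpha>) (UNIV - {f. f x \<noteq> \<alpha>})"
    by simp
  also have "\<dots> = 1 - p_leaf T \<alpha> x"
    unfolding p_leaf_def by (rule measure_pmf.prob_compl[simplified])
  finally show ?thesis .
qed

lemma RA_coin_eq:
  fixes T :: "'l ptree" and \<alpha> :: "'a::finite"
  assumes "distinct (leaves T)"
  shows "RA_coin T \<alpha> = 1 - (\<Sum>x\<in>set (leaves T). (1/2) ^ depth T x * p_leaf T \<alpha> x)"
proof -
  let ?M = "measure_pmf (evolve T \<alpha>)"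
  have integrable: "integrable ?M (\<lambda>f. indicator {\<alpha>} (f x) :: real)" for x
    by (rule measure_pmf.integrable_const_bound[where B=1]) (auto simp: indicator_def)
  have "RA_coin T \<alpha> = (\<integral>f. (\<Sum>x\<in>set (leaves T). (1/2) ^ depth T x * indicator {\<alpha>} (f x)) \<partial>?M)"
    unfolding RA_coin_def pmf_bind pmf_coin_toss[OF assms] ..
  also have "\<dots> = (\<Sum>x\<in>set (leaves T). (1/2) ^ depth T x * (1 - p_leaf T \<alpha> x))"
    by (simp add: integrable expectation_indicator_leaf_state del: sum_mult_indicator)
  also have "\<dots> = 1 - (\<Sum>x\<in>set (leaves T). (1/2) ^ depth T x * p_leaf T \<alpha> x)"
    using sum_leaf_weights_eq_1[OF assms] by (simp add: right_diff_distrib sum_subtractf)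
  finally show ?thesis .
qed

lemma convex_combination_le_Max:
  fixes w p :: "'b \<Rightarrow> real"
  assumes "\<forall>x\<in>A. 0 \<le> w x" "sum w A = 1"
  shows "(\<Sum>x\<in>A. w x * p x) \<le> Max (p ` A)"
proof -
  have "finite A"
    using assms(2) by (metis sum.infinite zero_neq_one)
  then have "(\<Sum>x\<in>A. w x * p x) \<le> (\<Sum>x\<in>A. w x * Max (p ` A))"
    using assms(1) by (intro sum_mono mult_left_mono) auto
  then show ?thesis
    using assms(2) by (simp flip: sum_distrib_right)
qed

lemma convex_combination_const:
  fixes w p :: "'b \<Rightarrow> real"
  assumes "sum w A = 1" "\<forall>x\<in>A. \<forall>y\<in>A. p x = p y"
  shows "(\<Sum>x\<in>A. w x * p x) = Max (p ` A)"
proof -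
  obtain x0 where x0: "x0 \<in> A"
    using assms(1) by (metis all_not_in_conv sum.empty zero_neq_one)
  with assms(2) have const: "\<And>x. x \<in> A \<Longrightarrow> p x = p x0"
    by blast
  have "(\<Sum>x\<in>A. w x * p x) = (\<Sum>x\<in>A. w x * p x0)"
    using const by simp
  also have "\<dots> = p x0"
    using assms(1) by (simp flip: sum_distrib_right)
  also have "\<dots> = Max (p ` A)"
    using x0 const by (metis Max_singleton image_constant_conv empty_iff image_cong)
  finally show ?thesis .
qed

theorem theorem2:
  fixes T :: "'l ptree" and \<alpha> :: "'a::finite"
  assumes r2: "CARD('a) \<ge> 2"
    and root2: "\<exists>p1 T1 p2 T2. T = Node p1 T1 p2 T2"
    and dist: "distinct (leaves T)"
    and probs: "\<forall>p \<in> set (edge_probs T). 0 \<le> p \<and> p \<le> (real CARD('a) - 1) / real CARD('a)"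
  shows "RA_coin T \<alpha> = 1 - (\<Sum>x\<in>set (leaves T). (1/2) ^ depth T x * p_leaf T \<alpha> x)
         \<and> RA_coin T \<alpha> \<ge> 1 - Max (p_leaf T \<alpha> ` set (leaves T))
         \<and> ((\<forall>x\<in>set (leaves T). \<forall>y\<in>set (leaves T). p_leaf T \<alpha> x = p_leaf T \<alpha> y) \<longrightarrow>
             RA_coin T \<alpha> = 1 - Max (p_leaf T \<alpha> ` set (leaves T)))"
proof -
  let ?L = "set (leaves T)" and ?w = "\<lambda>x. (1/2::real) ^ depth T x"
  have weights: "\<forall>x\<in>?L. 0 \<le> ?w x" "sum ?w ?L = 1"
    by (simp, rule sum_leaf_weights_eq_1[OF dist])
  have RA: "RA_coin T \<alpha> = 1 - (\<Sum>x\<in>?L. ?w x * p_leaf T \<alpha> x)"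
    by (rule RA_coin_eq[OF dist])
  show ?thesis
  proof (intro conjI impI)
    show "RA_coin T \<alpha> \<ge> 1 - Max (p_leaf T \<alpha> ` ?L)"
      using RA convex_combination_le_Max[OF weights, of "p_leaf T \<alpha>"] by linarith
    show "RA_coin T \<alpha> = 1 - Max (p_leaf T \<alpha> ` ?L)"
      if "\<forall>x\<in>?L. \<forall>y\<in>?L. p_leaf T \<alpha> x = p_leaf T \<alpha> y"
      using RA convex_combination_const[OF weights(2) that] by linarith
  qed (rule RA)
qed

end
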